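(* Let $f$ be an element of the commutator subgroup of $F(\mathcal{R}[t,t^{-1}])$, expanded as $f=\sum_{i\ge0}(t-1)^iA_i$ with $A_i\in M_2(\mathcal{R})$. Then for every $i\ge1$, all entries of $A_i$ lie in $\Sigma$.
   Context: $\mathcal{R}=\mathbb{Z}[x,x^{-1},y,y^{-1}]$; $\Sigma$ is the augmentation ideal of $\mathcal{R}$ (kernel of $x,y\mapsto1$ to $\mathbb{Z}$). $F(\mathcal{R}[t,t^{-1}])$ is the subgroup of $GL_2(\mathcal{R}[t,t^{-1}])$ generated by $M_1=\begin{pmatrix}1&1-y\\0&x\end{pmatrix}$ and $M_2T=\begin{pmatrix}yt&0\\1-xt&1\end{pmatrix}$. Via $t=1+s$, $t^{-1}=\sum_{i\ge0}(-s)^i$, $\mathcal{R}[t,t^{-1}]$ embeds in the power series ring $\mathcal{R}[[s]]$, so each matrix over $\mathcal{R}[t,t^{-1}]$ has a unique expansion $\sum_{i\ge0}(t-1)^iA_i$ with $A_i$ matrices over $\mathcal{R}$ ($A_0$ is the matrix obtained by setting $t=1$). *)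

theory Defs
  imports "HOL-Analysis.Finite_Cartesian_Product" "HOL-Algebra.Solvable_Groups"
    "HOL-Library.Poly_Mapping" "HOL-Library.Product_Plus"
    "HOL-Computational_Algebra.Formal_Power_Series"
begin

text \<open>The Laurent polynomial ring R = Z[x,x^-1,y,y^-1], realised as the integral
  group ring of Z^2: finitely supported functions (int \<times> int) \<Rightarrow> int with
  convolution product.\<close>
type_synonym LR = "(int \<times> int) \<Rightarrow>\<^sub>0 int"

definition LX :: LR where "LX = Poly_Mapping.single (1, 0) 1"
definition LY :: LR where "LY = Poly_Mapping.single (0, 1) 1"

text \<open>Augmentation map (the ring map x, y \<mapsto> 1 into Z) and its kernel Sigma.\<close>
definition aug :: "LR \<Rightarrow> int" where
  "aug p = (\<Sum>k\<in>Poly_Mapping.keys p. Poly_Mapping.lookup p k)"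

definition Sigma_ideal :: "LR set" where
  "Sigma_ideal = {p. aug p = 0}"

text \<open>R[t,t^-1] embedded in R[[s]] via t = 1 + s, t^-1 = sum (-s)^i.\<close>
definition tt :: "LR fps" where "tt = 1 + fps_X"
definition ttinv :: "LR fps" where "ttinv = Abs_fps (\<lambda>i. (-1) ^ i)"

definition mat2 :: "'a \<Rightarrow> 'a \<Rightarrow> 'a \<Rightarrow> 'a \<Rightarrow> 'a ^ 2 ^ 2" where
  "mat2 a b c d = (\<chi> i j. if i = 1 then (if j = 1 then a else b)
                           else (if j = 1 then c else d))"

definition GL2 :: "(LR fps ^ 2 ^ 2) monoid" where
  "GL2 = \<lparr> carrier = {A. invertible A}, monoid.mult = (\<lambda>A B. A ** B), monoid.one = mat 1 \<rparr>"

definition M1 :: "LR fps ^ 2 ^ 2" where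
  "M1 = mat2 1 (fps_const (1 - LY)) 0 (fps_const LX)"

definition M2T :: "LR fps ^ 2 ^ 2" where
  "M2T = mat2 (fps_const LY * tt) 0 (1 - fps_const LX * tt) 1"

definition Fgrp :: "(LR fps ^ 2 ^ 2) set" where
  "Fgrp = generate GL2 {M1, M2T}"

text \<open>Coefficient matrices A_i of f = sum_i (t-1)^i A_i = sum_i s^i A_i.\<close>
definition coeff_mat :: "LR fps ^ 2 ^ 2 \<Rightarrow> nat \<Rightarrow> LR ^ 2 ^ 2" where
  "coeff_mat f i = (\<chi> j k. fps_nth (f $ j $ k) i)"

end

theory Submission
  imports Defs "HOL-Analysis.Cartesian_Space"
begin

text \<open>The augmentation \<open>x, y \<mapsto> 1\<close> is a ring homomorphism, so applying it to every
  coefficient of every entry is a group homomorphism from \<open>GL\<^sub>2(\<R>[[s]])\<close> to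
  \<open>GL\<^sub>2(\<int>[[s]])\<close>. It sends \<open>M\<^sub>1\<close> to the identity, so the image of \<open>F\<close> is
  the cyclic group generated by the image of \<open>M\<^sub>2T\<close>. Being abelian, this image
  kills all commutators: every element of the commutator subgroup is mapped to the
  identity matrix, i.e. the augmentations of its coefficient matrices \<open>A\<^sub>i\<close>,
  \<open>i \<ge> 1\<close>, vanish.\<close>

lemma (in group) generate_insert_one:
  assumes "S \<subseteq> carrier G"
  shows "generate G (insert \<one> S) = generate G S"
proof
  have "insert \<one> S \<subseteq> generate G S"
    by (auto intro: generate.one generate.incl)
  then show "generate G (insert \<one> S) \<subseteq> generate G S"
    by (rule generate_subgroup_incl[OF _ generate_is_subgroup[OF assms]])
qed (rule mono_generate, blast)

lemma (in group) generate_singleton_comm: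
  assumes "a \<in> carrier G" "x \<in> generate G {a}" "y \<in> generate G {a}"
  shows "x \<otimes> y = y \<otimes> x"
proof -
  obtain i j :: int where "x = a [^] i" "y = a [^] j"
    using assms generate_pow by auto
  then show ?thesis
    using assms(1) by (simp flip: int_pow_mult add: add.commute)
qed

lemma (in group) derived_of_commuting_subset:
  assumes "H \<subseteq> carrier G" and comm: "\<And>x y. x \<in> H \<Longrightarrow> y \<in> H \<Longrightarrow> x \<otimes> y = y \<otimes> x"
  shows "derived G H \<subseteq> {\<one>}"
proof -
  have "derived_set G H \<subseteq> {\<one>}"
  proof
    fix z assume "z \<in> derived_set G H"
    then obtain x y where xy: "x \<in> H" "y \<in> H" and z: "z = x \<otimes> y \<otimes> inv x \<otimes> inv y"
      by blast
    have "x \<in> carrier G" "y \<in> carrier G"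
      using xy assms(1) by auto
    then show "z \<in> {\<one>}"
      using comm[OF xy] by (simp add: z m_assoc)
  qed
  then show ?thesis
    unfolding derived_def using mono_generate generate_one by blast
qed

lemma (in group) derived_generate_singleton:
  assumes "a \<in> carrier G"
  shows "derived G (generate G {a}) = {\<one>}"
proof
  show "derived G (generate G {a}) \<subseteq> {\<one>}"
    using assms generate_in_carrier[of "{a}"] generate_singleton_comm
    by (intro derived_of_commuting_subset) auto
qed (simp add: derived_def generate.one)

locale ring_hom_map =
  fixes \<phi> :: "'a::comm_ring_1 \<Rightarrow> 'b::comm_ring_1"
  assumes map_add: "\<phi> (a + b) = \<phi> a + \<phi> b"
    and map_mult: "\<phi> (a * b) = \<phi> a * \<phi> b"
    and map_one: "\<phi> 1 = 1"
begin

lemma map_zero: "\<phi> 0 = 0"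
  using map_add[of 0 0] by simp

lemma map_diff: "\<phi> (a - b) = \<phi> a - \<phi> b"
  using map_add[of "a - b" b] by (simp add: eq_diff_eq)

lemma map_sum: "\<phi> (sum g A) = (\<Sum>x\<in>A. \<phi> (g x))"
  by (induction A rule: infinite_finite_induct) (simp_all add: map_zero map_add)

end

lemma aug_add: "aug (p + q) = aug p + aug q"
proof -
  have aug_Sum_any: "aug r = (\<Sum>k. Poly_Mapping.lookup r k)" for r
    unfolding aug_def Sum_any.expand_set by (simp add: keys.rep_eq)
  have fin: "finite {k. Poly_Mapping.lookup r k \<noteq> 0}" for r :: LR
    using finite_keys[of r] by (simp add: keys.rep_eq)
  show ?thesis
    unfolding aug_Sum_any Poly_Mapping.lookup_add by (rule Sum_any.distrib[OF fin fin])
qed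

lemma aug_zero [simp]: "aug 0 = 0"
  by (simp add: aug_def)

lemma aug_single [simp]: "aug (Poly_Mapping.single k v) = v"
  by (simp add: aug_def)

lemma update_eq_add_single:
  assumes "k \<notin> Poly_Mapping.keys p"
  shows "Poly_Mapping.update k v p = p + Poly_Mapping.single k v"
  using assms
  by (intro poly_mapping_eqI)
    (auto simp: Poly_Mapping.lookup_update Poly_Mapping.lookup_add Poly_Mapping.lookup_single
      in_keys_iff when_def)

lemma aug_single_mult: "aug (Poly_Mapping.single k v * q) = v * aug q"
  by (induction q rule: update_induct)
    (simp_all add: update_eq_add_single distrib_left mult_single aug_add)

lemma aug_mult: "aug (p * q) = aug p * aug q"
  by (induction p rule: update_induct)
    (simp_all add: update_eq_add_single distrib_right aug_add aug_single_mult)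

interpretation aug: ring_hom_map aug
  by unfold_locales (simp_all add: aug_add aug_mult flip: single_one)

definition fps_map :: "('a \<Rightarrow> 'b) \<Rightarrow> 'a fps \<Rightarrow> 'b fps" where
  "fps_map \<phi> f = Abs_fps (\<lambda>n. \<phi> (fps_nth f n))"

lemma fps_map_nth [simp]: "fps_nth (fps_map \<phi> f) n = \<phi> (fps_nth f n)"
  by (simp add: fps_map_def)

definition matrix_map :: "('a \<Rightarrow> 'b) \<Rightarrow> 'a ^ 'n ^ 'm \<Rightarrow> 'b ^ 'n ^ 'm" where
  "matrix_map \<phi> A = (\<chi> i j. \<phi> (A $ i $ j))"

lemma matrix_map_mat2: "matrix_map \<phi> (mat2 a b c d) = mat2 (\<phi> a) (\<phi> b) (\<phi> c) (\<phi> d)"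
  by (simp add: vec_eq_iff forall_2 matrix_map_def mat2_def)

context ring_hom_map
begin

lemma ring_hom_map_fps_map: "ring_hom_map (fps_map \<phi>)"
  by unfold_locales
    (simp_all add: fps_ext fps_mult_nth map_add map_sum map_mult map_one map_zero)

lemma fps_map_const: "fps_map \<phi> (fps_const c) = fps_const (\<phi> c)"
  by (simp add: fps_ext map_zero)

lemma matrix_map_mult: "matrix_map \<phi> (A ** B) = matrix_map \<phi> A ** matrix_map \<phi> B"
  by (simp add: matrix_map_def matrix_matrix_mult_def vec_eq_iff map_sum map_mult)

lemma matrix_map_one: "matrix_map \<phi> (mat 1) = mat 1"
  by (simp add: matrix_map_def mat_def vec_eq_iff map_one map_zero)

lemma invertible_matrix_map:
  assumes "invertible A"
  shows "invertible (matrix_map \<phi> A)"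
  using assms unfolding invertible_def
  by (metis matrix_map_mult matrix_map_one)

end

definition GL :: "('a::comm_ring_1 ^ 'n ^ 'n) monoid" where
  "GL = \<lparr>carrier = {A. invertible A}, monoid.mult = (**), monoid.one = mat 1\<rparr>"

lemma GL_simps [simp]:
  "carrier GL = {A. invertible A}" "x \<otimes>\<^bsub>GL\<^esub> y = x ** y" "\<one>\<^bsub>GL\<^esub> = mat 1"
  by (simp_all add: GL_def)

lemma GL2_eq_GL: "GL2 = GL"
  by (simp add: GL2_def GL_def)

lemma group_GL: "group GL"
proof (rule groupI)
  fix A :: "'a::comm_ring_1 ^ 'n ^ 'n"
  assume "A \<in> carrier GL"
  then obtain B where "A ** B = mat 1" "B ** A = mat 1"
    by (auto simp: invertible_def)
  then show "\<exists>B\<in>carrier GL. B \<otimes>\<^bsub>GL\<^esub> A = \<one>\<^bsub>GL\<^esub>"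
    by (auto simp: invertible_def)
qed (auto simp: invertible_mult matrix_mul_assoc intro: invertible_def[THEN iffD2])

lemma (in ring_hom_map) group_hom_matrix_map:
  "group_hom (GL :: ('a ^ 'n ^ 'n) monoid) (GL :: ('b ^ 'n ^ 'n) monoid) (matrix_map \<phi>)"
  by (intro group_hom.intro group_hom_axioms.intro group_GL)
    (auto simp: hom_def invertible_matrix_map matrix_map_mult)

lemma mat2_mult:
  "mat2 a b c d ** mat2 e f g h = mat2 (a*e + b*g) (a*f + b*h) (c*e + d*g) (c*f + d*h)"
  by (simp add: vec_eq_iff forall_2 matrix_matrix_mult_def sum_2 mat2_def)

lemma mat_one_eq_mat2: "(mat 1 :: 'a::{zero,one} ^ 2 ^ 2) = mat2 1 0 0 1"
  by (simp add: vec_eq_iff forall_2 mat_def mat2_def)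

lemma invertible_mat2:
  fixes a b c d e :: "'a::comm_ring_1"
  assumes "(a * d - b * c) * e = 1"
  shows "invertible (mat2 a b c d)"
proof -
  let ?B = "mat2 (e * d) (- (e * b)) (- (e * c)) (e * a)"
  have "mat2 a b c d ** ?B = mat 1" "?B ** mat2 a b c d = mat 1"
    using assms by (simp_all add: mat2_mult mat_one_eq_mat2 algebra_simps)
  then show ?thesis
    unfolding invertible_def by blast
qed

interpretation aug_fps: ring_hom_map "fps_map aug"
  by (rule aug.ring_hom_map_fps_map)

lemma tt_mult_ttinv: "tt * ttinv = 1"
proof (rule fps_ext)
  fix n
  show "fps_nth (tt * ttinv) n = fps_nth 1 n"
    by (cases n) (simp_all add: tt_def ttinv_def distrib_right)
qed

lemma invertible_M1: "invertible M1"
  unfolding M1_def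
proof (rule invertible_mat2)
  have "LX * Poly_Mapping.single (-1, 0) 1 = 1"
    by (simp add: LX_def mult_single zero_prod_def flip: single_one)
  then show "(1 * fps_const LX - fps_const (1 - LY) * 0)
      * fps_const (Poly_Mapping.single (-1, 0) 1) = 1"
    by simp
qed

lemma invertible_M2T: "invertible M2T"
  unfolding M2T_def
proof (rule invertible_mat2)
  let ?c = "Poly_Mapping.single (0, -1) 1 :: LR"
  have "LY * ?c = 1"
    by (simp add: LY_def mult_single zero_prod_def flip: single_one)
  have "(fps_const LY * tt * 1 - 0 * (1 - fps_const LX * tt)) * (fps_const ?c * ttinv)
      = fps_const (LY * ?c) * (tt * ttinv)"
    by (simp add: ac_simps)
  also have "\<dots> = 1"
    using \<open>LY * ?c = 1\<close> by (simp add: tt_mult_ttinv)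
  finally show "(fps_const LY * tt * 1 - 0 * (1 - fps_const LX * tt)) * (fps_const ?c * ttinv) = 1" .
qed

lemma generators_in_GL: "{M1, M2T} \<subseteq> carrier GL"
  using invertible_M1 invertible_M2T by simp

lemma Fgrp_subset_GL: "Fgrp \<subseteq> carrier GL"
  unfolding Fgrp_def GL2_eq_GL
  using group.generate_in_carrier[OF group_GL generators_in_GL] by blast

abbreviation aug_matrix :: "LR fps ^ 2 ^ 2 \<Rightarrow> int fps ^ 2 ^ 2" where
  "aug_matrix \<equiv> matrix_map (fps_map aug)"

lemma aug_matrix_M1: "aug_matrix M1 = mat 1"
  by (simp add: M1_def matrix_map_mat2 mat_one_eq_mat2 aug.fps_map_const aug_fps.map_one
      aug_fps.map_zero aug.map_diff aug.map_one LX_def LY_def)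

lemma aug_matrix_M2T_in_GL: "aug_matrix M2T \<in> carrier GL"
  using aug_fps.invertible_matrix_map[OF invertible_M2T] by simp

lemma aug_matrix_Fgrp: "aug_matrix ` Fgrp = generate GL {aug_matrix M2T}"
proof -
  interpret group_hom GL GL aug_matrix
    by (rule aug_fps.group_hom_matrix_map)
  have "aug_matrix ` Fgrp = generate GL (insert (mat 1) {aug_matrix M2T})"
    unfolding Fgrp_def GL2_eq_GL generate_img[OF generators_in_GL, symmetric]
    by (simp add: aug_matrix_M1)
  also have "\<dots> = generate GL {aug_matrix M2T}"
    using H.generate_insert_one aug_matrix_M2T_in_GL by simp
  finally show ?thesis .
qed

lemma aug_matrix_derived_Fgrp:
  assumes "f \<in> derived GL2 Fgrp"
  shows "aug_matrix f = mat 1"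
proof -
  interpret group_hom GL GL aug_matrix
    by (rule aug_fps.group_hom_matrix_map)
  have "aug_matrix f \<in> derived GL (aug_matrix ` Fgrp)"
    using assms derived_img[OF Fgrp_subset_GL] by (auto simp: GL2_eq_GL)
  also have "derived GL (aug_matrix ` Fgrp) = {\<one>\<^bsub>GL\<^esub>}"
    unfolding aug_matrix_Fgrp by (rule H.derived_generate_singleton[OF aug_matrix_M2T_in_GL])
  finally show ?thesis
    by simp
qed

theorem lemma5:
  fixes f :: "LR fps ^ 2 ^ 2"
  assumes "f \<in> derived GL2 Fgrp"
  shows "\<forall>i\<ge>1. \<forall>j k. coeff_mat f i $ j $ k \<in> Sigma_ideal"
proof (intro allI impI)
  fix i :: nat and j k :: 2
  assume "i \<ge> 1"
  have "aug_matrix f $ j $ k = mat 1 $ j $ k"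
    using aug_matrix_derived_Fgrp[OF assms] by simp
  then have "fps_map aug (f $ j $ k) = (if j = k then 1 else 0)"
    by (simp add: matrix_map_def mat_def)
  then have "aug (fps_nth (f $ j $ k) i) = 0"
    using \<open>i \<ge> 1\<close> by (metis fps_map_nth fps_one_nth fps_zero_nth not_one_le_zero)
  then show "coeff_mat f i $ j $ k \<in> Sigma_ideal"
    by (simp add: coeff_mat_def Sigma_ideal_def)
qed

end
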